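(* Let $\{q_k:k\ge0\}$ be a non-decreasing sequence of nonnegative numbers with $q_0>0$ satisfying $\frac{q_{n-1}}{Q_n}=O(1/n)$ as $n\to\infty$. There is a constant $c>0$ such that for all $N\in\mathbb N$ and all $n\ge M_N$: (i) if $x\in I_N^{k,l}$ with $0\le k\le N-2$ and $k+1\le l\le N-1$, then $$\int_{I_N}|F_n(x-t)|\,d\mu(t)\le\frac{cM_lM_k}{nM_N};$$ (ii) if $x\in I_N^{k,N}$ with $0\le k\le N-1$, then $$\int_{I_N}|F_n(x-t)|\,d\mu(t)\le\frac{cM_k}{M_N}.$$
   Context: Let $m=(m_0,m_1,\dots)$ be a bounded sequence of integers $m_k\ge 2$; $G_m=\prod_k Z_{m_k}$ (a compact abelian group under coordinatewise addition mod $m_k$) with Haar probability measure $\mu$; $M_0=1$, $M_{k+1}=m_kM_k$, $n=\sum_j n_jM_j$ with $n_j\in Z_{m_j}$. $I_N=\{x: x_0=\dots=x_{N-1}=0\}$. For $0\le k<l<N$, $I_N^{k,l}$ is the set of $x\in G_m$ with $x_0=\dots=x_{k-1}=0$, $x_k\ne0$, $x_{k+1}=\dots=x_{l-1}=0$, $x_l\ne0$ (other coordinates arbitrary); for $0\le k<N$, $I_N^{k,N}$ is the set of $x$ with $x_0=\dots=x_{k-1}=0$, $x_k\ne 0$, $x_{k+1}=\dots=x_{N-1}=0$. $r_k(x)=\exp(2\pi i x_k/m_k)$, $\psi_n=\prod_k r_k^{n_k}$, $D_n=\sum_{k=0}^{n-1}\psi_k$. $Q_n=\sum_{k=0}^{n-1}q_k$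 and $F_n=\frac1{Q_n}\sum_{k=1}^nq_{n-k}D_k$. *)

theory Defs
  imports "HOL-Probability.Probability" "HOL-Library.Landau_Symbols"
begin

text \<open>Vilenkin group G_m: points are sequences x with x k < m k.
  Haar measure = infinite product of uniform measures on Z_{m_k}.\<close>

definition Vspace :: "(nat \<Rightarrow> nat) \<Rightarrow> (nat \<Rightarrow> nat) set" where
  "Vspace m = PiE UNIV (\<lambda>k. {..<m k})"

definition Vmu :: "(nat \<Rightarrow> nat) \<Rightarrow> (nat \<Rightarrow> nat) measure" where
  "Vmu m = PiM UNIV (\<lambda>k. uniform_count_measure {..<m k})"

definition Vsub :: "(nat \<Rightarrow> nat) \<Rightarrow> (nat \<Rightarrow> nat) \<Rightarrow> (nat \<Rightarrow> nat) \<Rightarrow> (nat \<Rightarrow> nat)" where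
  "Vsub m x t = (\<lambda>k. nat ((int (x k) - int (t k)) mod int (m k)))"

definition VM :: "(nat \<Rightarrow> nat) \<Rightarrow> nat \<Rightarrow> nat" where
  "VM m k = (\<Prod>j<k. m j)"

definition digit :: "(nat \<Rightarrow> nat) \<Rightarrow> nat \<Rightarrow> nat \<Rightarrow> nat" where
  "digit m n k = (n div VM m k) mod m k"

definition rk :: "(nat \<Rightarrow> nat) \<Rightarrow> nat \<Rightarrow> (nat \<Rightarrow> nat) \<Rightarrow> complex" where
  "rk m k x = exp (2 * pi * \<i> * of_nat (x k) / of_nat (m k))"

text \<open>psi_n = prod_k r_k^{n_k}; only finitely many digits are nonzero\<close>
definition psi :: "(nat \<Rightarrow> nat) \<Rightarrow> nat \<Rightarrow> (nat \<Rightarrow> nat) \<Rightarrow> complex" where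
  "psi m n x = (\<Prod>k\<in>{k. digit m n k \<noteq> 0}. rk m k x ^ digit m n k)"

definition Dir :: "(nat \<Rightarrow> nat) \<Rightarrow> nat \<Rightarrow> (nat \<Rightarrow> nat) \<Rightarrow> complex" where
  "Dir m n x = (\<Sum>k<n. psi m k x)"

definition Qs :: "(nat \<Rightarrow> real) \<Rightarrow> nat \<Rightarrow> real" where
  "Qs q n = (\<Sum>k<n. q k)"

definition Fn :: "(nat \<Rightarrow> nat) \<Rightarrow> (nat \<Rightarrow> real) \<Rightarrow> nat \<Rightarrow> (nat \<Rightarrow> nat) \<Rightarrow> complex" where
  "Fn m q n x = (1 / of_real (Qs q n)) * (\<Sum>k=1..n. of_real (q (n - k)) * Dir m k x)"

definition IN :: "(nat \<Rightarrow> nat) \<Rightarrow> nat \<Rightarrow> (nat \<Rightarrow> nat) set" where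
  "IN m N = {x \<in> Vspace m. \<forall>j<N. x j = 0}"

definition INkl :: "(nat \<Rightarrow> nat) \<Rightarrow> nat \<Rightarrow> nat \<Rightarrow> nat \<Rightarrow> (nat \<Rightarrow> nat) set" where
  "INkl m N k l = {x \<in> Vspace m. (\<forall>j<k. x j = 0) \<and> x k \<noteq> 0 \<and>
      (\<forall>j. k < j \<and> j < l \<longrightarrow> x j = 0) \<and> x l \<noteq> 0}"

definition INkN :: "(nat \<Rightarrow> nat) \<Rightarrow> nat \<Rightarrow> nat \<Rightarrow> (nat \<Rightarrow> nat) set" where
  "INkN m N k = {x \<in> Vspace m. (\<forall>j<k. x j = 0) \<and> x k \<noteq> 0 \<and>
      (\<forall>j. k < j \<and> j < N \<longrightarrow> x j = 0)}"

end

theory Submission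
  imports Defs
begin

text \<open>Both bounds hold pointwise in \<open>y = x - t\<close>. If \<open>M_s\<close> divides \<open>X\<close> and \<open>b < M_s\<close>, the digits of
  \<open>X + b\<close> are those of \<open>X\<close> plus those of \<open>b\<close>, so \<open>\<psi>_(X+b) = \<psi>_X \<psi>_b\<close>. Hence
  \<open>D_(M_(k+1)) = (\<Sum>d<m_k. r_k^d) D_(M_k)\<close> vanishes as soon as \<open>r_k(y) \<noteq> 1\<close>: the blocks of length
  \<open>M_(k+1)\<close> of \<open>\<psi>_i(y)\<close> sum to zero and \<open>|D_n(y)| \<le> M_(k+1)\<close>, which bounds \<open>|F_n(y)|\<close> too.
  If also \<open>r_l(y) \<noteq> 1\<close> for some \<open>l > k\<close>, the blocks of length \<open>M_(l+1)\<close> of \<open>D_i(y)\<close> sum to zero,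
  so its partial sums are at most \<open>M_(l+1) M_(k+1)\<close>, and Abel summation against the decreasing
  weights \<open>q_(n-1-t)\<close> gives \<open>|F_n(y)| \<le> q_(n-1)/Q_n M_(l+1) M_(k+1)\<close>. For \<open>t \<in> I_N\<close> the first
  \<open>N\<close> digits of \<open>x - t\<close> are those of \<open>x\<close>; integrating over \<open>I_N\<close>, of measure \<open>1/M_N\<close>, and using
  \<open>q_(n-1)/Q_n \<le> C/n\<close> and \<open>M_(j+1) \<le> (sup m) M_j\<close> gives both estimates.\<close>

lemma sum_lessThan_add:
  fixes g :: "nat \<Rightarrow> 'a::comm_monoid_add"
  shows "(\<Sum>i<X + a. g i) = (\<Sum>i<X. g i) + (\<Sum>t<a. g (X + t))"
  by (induction a) (simp_all add: add.assoc)

lemma sum_lessThan_mult: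
  fixes g :: "nat \<Rightarrow> 'a::comm_monoid_add"
  shows "(\<Sum>i<c * L. g i) = (\<Sum>d<c. \<Sum>t<L. g (d * L + t))"
proof (induction c)
  case (Suc c)
  have "(\<Sum>i<Suc c * L. g i) = (\<Sum>i<c * L + L. g i)" by (simp add: add.commute)
  then show ?case by (simp only: sum_lessThan_add Suc.IH sum.lessThan_Suc)
qed simp

lemma norm_sum_le_block_length:
  fixes f :: "nat \<Rightarrow> 'a::real_normed_vector"
  assumes "0 < L" and blocks: "\<And>c. (\<Sum>t<L. f (c * L + t)) = 0" and "\<And>i. norm (f i) \<le> K"
  shows "norm (\<Sum>i<n. f i) \<le> L * K"
proof -
  let ?c = "n div L"
  have "(\<Sum>i<n. f i) = (\<Sum>i<?c * L. f i) + (\<Sum>t<n mod L. f (?c * L + t))"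
    by (metis div_mult_mod_eq sum_lessThan_add)
  also have "(\<Sum>i<?c * L. f i) = 0" by (simp add: sum_lessThan_mult blocks)
  finally have "norm (\<Sum>i<n. f i) \<le> (\<Sum>t<n mod L. norm (f (?c * L + t)))"
    by (simp add: norm_sum)
  also have "\<dots> \<le> (\<Sum>t<n mod L. K)" by (intro sum_mono assms(3))
  also have "\<dots> \<le> L * K"
    using assms(1) order_trans[OF norm_ge_zero assms(3)] by (simp add: mult_right_mono)
  finally show ?thesis .
qed

lemma Dir_add: "Dir m (X + a) y = Dir m X y + (\<Sum>t<a. psi m (X + t) y)"
  unfolding Dir_def by (rule sum_lessThan_add)

lemma norm_rk: "norm (rk m j y) = 1"
  unfolding rk_def by (simp add: norm_exp_eq_Re)

lemma norm_psi: "norm (psi m i y) = 1"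
  unfolding psi_def by (simp add: prod_norm[symmetric] norm_power norm_rk)

lemma rk_eq_1_iff:
  assumes "y j < m j"
  shows "rk m j y = 1 \<longleftrightarrow> y j = 0"
proof
  assume "rk m j y = 1"
  then obtain n :: int where "Im (2 * pi * \<i> * of_nat (y j) / of_nat (m j)) = of_int (2 * n) * pi"
    unfolding rk_def exp_eq_1 by blast
  then have "(2 * pi) * (real (y j) / real (m j)) = (2 * pi) * of_int n" by simp
  then have "real (y j) / real (m j) = of_int n" using pi_gt_zero by (simp only: mult_left_cancel)
  moreover have "0 \<le> real (y j) / real (m j)" "real (y j) / real (m j) < 1" using assms by simp_all
  ultimately have "n = 0" by linarith
  then show "y j = 0" using \<open>real (y j) / real (m j) = of_int n\<close> assms by simp
qed (simp add: rk_def)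

lemma VM_Suc: "VM m (Suc j) = VM m j * m j"
  by (simp add: VM_def)

locale vilenkin =
  fixes m :: "nat \<Rightarrow> nat"
  assumes m_ge2: "\<And>k. 2 \<le> m k"
begin

lemma m_pos: "0 < m k"
  using m_ge2[of k] by linarith

lemma VM_pos: "0 < VM m j"
  unfolding VM_def by (rule prod_pos) (simp add: m_pos)

lemma VM_dvd: "i \<le> j \<Longrightarrow> VM m i dvd VM m j"
  unfolding VM_def by (rule prod_dvd_prod_subset) auto

lemma less_VM: "j < VM m j"
proof (induction j)
  case 0 then show ?case by (simp add: VM_def)
next
  case (Suc j)
  have "VM m j * 2 \<le> VM m (Suc j)" using m_ge2[of j] by (simp add: VM_Suc)
  then show ?case using Suc.IH by linarith
qed

lemma digit_eq_0_if_less: "n < VM m j \<Longrightarrow> digit m n j = 0"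
  by (simp add: digit_def)

lemma digit_nonzero_less: "digit m n j \<noteq> 0 \<Longrightarrow> j < n"
  using digit_eq_0_if_less less_VM[of j] by (meson not_le order.strict_trans1)

lemma digit_add:
  assumes "VM m s dvd X" "b < VM m s"
  shows "digit m (X + b) j = digit m X j + digit m b j"
proof (cases "j < s")
  case True
  have "VM m (Suc j) dvd X" using True by (intro dvd_trans[OF VM_dvd assms(1)]) simp
  then obtain t where "X = VM m (Suc j) * t" by (elim dvdE)
  then have X: "X = VM m j * (m j * t)" by (simp add: VM_Suc mult.assoc)
  then have "digit m X j = 0" using VM_pos[of j] by (simp add: digit_def)
  moreover have "(X + b) div VM m j = m j * t + b div VM m j"
    unfolding X using VM_pos[of j] by (simp add: add.commute)
  ultimately show ?thesis by (simp add: digit_def)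
next
  case False
  obtain R where R: "VM m j = VM m s * R" using VM_dvd[of s j] False by (auto elim!: dvdE)
  obtain t where X: "X = VM m s * t" using assms(1) by (auto elim!: dvdE)
  have "(X + b) div VM m s = X div VM m s" unfolding X using VM_pos[of s] assms(2) by simp
  then have "(X + b) div VM m j = X div VM m j" unfolding R by (simp add: div_mult2_eq)
  moreover have "digit m b j = 0"
    using assms(2) VM_dvd[of s j] False VM_pos[of j]
    by (intro digit_eq_0_if_less) (auto dest: dvd_imp_le)
  ultimately show ?thesis by (simp add: digit_def)
qed

lemma digit_mult_VM:
  assumes "d < m s"
  shows "digit m (d * VM m s) j = (if j = s then d else 0)"
proof (cases j s rule: linorder_cases)
  case less
  then obtain R where "VM m s = VM m (Suc j) * R" using VM_dvd[of "Suc j" s] by (auto elim!: dvdE)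
  then have "d * VM m s div VM m j = m j * (d * R)" using VM_pos[of j] by (simp add: VM_Suc ac_simps)
  then show ?thesis using less by (simp add: digit_def)
next
  case greater
  have "d * VM m s < VM m (Suc s)" using assms VM_pos[of s] by (simp add: VM_Suc)
  also have "\<dots> \<le> VM m j" using greater VM_dvd[of "Suc s" j] VM_pos[of j] by (simp add: dvd_imp_le)
  finally show ?thesis using greater by (simp add: digit_eq_0_if_less)
qed (use assms VM_pos[of s] in \<open>simp add: digit_def\<close>)

lemma psi_eq_prod: "i \<le> K \<Longrightarrow> psi m i y = (\<Prod>j<K. rk m j y ^ digit m i j)"
  unfolding psi_def
  by (rule prod.mono_neutral_left) (auto intro: less_le_trans[OF digit_nonzero_less])

lemma psi_add:
  assumes "VM m s dvd X" "b < VM m s"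
  shows "psi m (X + b) y = psi m X y * psi m b y"
  using psi_eq_prod[of "X + b" "X + b"] psi_eq_prod[of X "X + b"] psi_eq_prod[of b "X + b"]
  by (simp add: digit_add[OF assms] power_add prod.distrib)

lemma psi_mult_VM:
  assumes "d < m s"
  shows "psi m (d * VM m s) y = rk m s y ^ d"
proof -
  have "{j. digit m (d * VM m s) j \<noteq> 0} = (if d = 0 then {} else {s})"
    using digit_mult_VM[OF assms] by auto
  then show ?thesis by (simp add: psi_def digit_mult_VM[OF assms])
qed

lemma rk_power_m: "rk m s y ^ m s = 1"
proof -
  have "rk m s y ^ m s = exp (of_nat (m s) * (2 * pi * \<i> * of_nat (y s) / of_nat (m s)))"
    unfolding rk_def by (rule exp_of_nat_mult[symmetric])
  also have "\<dots> = exp ((2 * of_nat (y s) * pi) * \<i>)" using m_pos[of s] by (simp add: field_simps)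
  also have "\<dots> = 1" by (rule exp_integer_2pi) simp
  finally show ?thesis .
qed

lemma sum_rk_powers_eq_0: "rk m s y \<noteq> 1 \<Longrightarrow> (\<Sum>d<m s. rk m s y ^ d) = 0"
  by (simp add: sum_gp_strict rk_power_m)

lemma sum_psi_shift:
  assumes "VM m s dvd X" "a \<le> VM m s"
  shows "(\<Sum>t<a. psi m (X + t) y) = psi m X y * Dir m a y"
  unfolding Dir_def sum_distrib_left using assms by (intro sum.cong) (auto simp: psi_add)

lemma Dir_mult_VM: "Dir m (c * VM m s) y = (\<Sum>d<c. psi m (d * VM m s) y) * Dir m (VM m s) y"
proof (induction c)
  case (Suc c)
  have "Dir m (Suc c * VM m s) y = Dir m (c * VM m s + VM m s) y" by (simp add: add.commute)
  also have "\<dots> = Dir m (c * VM m s) y + psi m (c * VM m s) y * Dir m (VM m s) y"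
    by (simp only: Dir_add sum_psi_shift[OF dvd_triv_right order_refl])
  finally show ?case by (simp add: Suc.IH distrib_right)
qed (simp add: Dir_def)

lemma Dir_mult_VM_Suc_eq_0:
  assumes "rk m k y \<noteq> 1"
  shows "Dir m (c * VM m (Suc k)) y = 0"
proof -
  have "Dir m (VM m (Suc k)) y = 0"
    using Dir_mult_VM[of "m k" k y] by (simp add: VM_Suc mult.commute psi_mult_VM sum_rk_powers_eq_0[OF assms])
  then show ?thesis by (simp add: Dir_mult_VM[of c "Suc k"])
qed

lemma norm_Dir_le:
  assumes "rk m k y \<noteq> 1"
  shows "norm (Dir m n y) \<le> VM m (Suc k)"
proof -
  have "Dir m (VM m (Suc k)) y = 0" using Dir_mult_VM_Suc_eq_0[OF assms, of 1] by simp
  then have "(\<Sum>t<VM m (Suc k). psi m (c * VM m (Suc k) + t) y) = 0" for c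
    by (simp add: sum_psi_shift[OF dvd_triv_right order_refl])
  then have "norm (\<Sum>i<n. psi m i y) \<le> real (VM m (Suc k)) * 1"
    by (intro norm_sum_le_block_length) (simp_all add: VM_pos norm_psi)
  then show ?thesis by (simp add: Dir_def)
qed

lemma sum_Dir_block_eq_0:
  assumes "k < l" "rk m k y \<noteq> 1" "rk m l y \<noteq> 1"
  shows "(\<Sum>t<VM m (Suc l). Dir m (c * VM m (Suc l) + t) y) = 0"
proof -
  let ?L = "VM m (Suc l)"
  \<comment> \<open>\<open>D\<close> vanishes at the multiple \<open>X\<close> of \<open>M_(k+1)\<close>, and \<open>\<psi>_X = \<psi>_(c L) r_l^d\<close>.\<close>
  have Dir_eq: "Dir m (c * ?L + (d * VM m l + a)) y = psi m (c * ?L) y * (rk m l y ^ d * Dir m a y)"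
    if "d < m l" "a < VM m l" for d a
  proof -
    define X where "X = c * ?L + d * VM m l"
    have "VM m l dvd X" unfolding X_def using VM_dvd[of l "Suc l"] by simp
    moreover have "VM m (Suc k) dvd X" using \<open>k < l\<close> by (intro dvd_trans[OF VM_dvd \<open>VM m l dvd X\<close>]) simp
    then obtain c' where "X = VM m (Suc k) * c'" by (elim dvdE)
    then have "Dir m X y = 0" using Dir_mult_VM_Suc_eq_0[OF assms(2), of c'] by (simp add: mult.commute)
    moreover have "psi m X y = psi m (c * ?L) y * rk m l y ^ d"
      unfolding X_def using that VM_pos[of l]
      by (simp add: psi_add[where s="Suc l"] psi_mult_VM VM_Suc)
    ultimately show ?thesis
      using that by (simp add: X_def add.assoc[symmetric] Dir_add sum_psi_shift[where s=l])
  qed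
  have "(\<Sum>t<?L. Dir m (c * ?L + t) y) = (\<Sum>d<m l. \<Sum>a<VM m l. Dir m (c * ?L + (d * VM m l + a)) y)"
    using sum_lessThan_mult[of "\<lambda>t. Dir m (c * ?L + t) y" "m l" "VM m l"] by (simp add: VM_Suc mult.commute)
  also have "\<dots> = psi m (c * ?L) y * ((\<Sum>d<m l. rk m l y ^ d) * (\<Sum>a<VM m l. Dir m a y))"
    unfolding sum_product unfolding sum_distrib_left by (intro sum.cong refl) (simp add: Dir_eq)
  also have "\<dots> = 0" by (simp add: sum_rk_powers_eq_0[OF assms(3)])
  finally show ?thesis .
qed

lemma norm_sum_Dir_le:
  assumes "k < l" "rk m k y \<noteq> 1" "rk m l y \<noteq> 1"
  shows "norm (\<Sum>i<n. Dir m i y) \<le> real (VM m (Suc l)) * real (VM m (Suc k))"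
  using norm_Dir_le[OF assms(2)]
  by (intro norm_sum_le_block_length) (simp_all add: VM_pos sum_Dir_block_eq_0[OF assms])

end

lemma norm_sum_decreasing_weights_le:
  fixes v :: "nat \<Rightarrow> real" and a :: "nat \<Rightarrow> 'a::real_normed_vector"
  assumes dec: "\<And>t. v (Suc t) \<le> v t" and nonneg: "\<And>t. 0 \<le> v t"
    and partial_sums: "\<And>j. j \<le> n \<Longrightarrow> norm (\<Sum>t<j. a t) \<le> K"
  shows "norm (\<Sum>t<n. v t *\<^sub>R a t) \<le> v 0 * K"
proof -
  define S where "S j = (\<Sum>t<j. a t)" for j
  have S_le: "j \<le> n \<Longrightarrow> norm (S j) \<le> K" for j by (simp add: S_def partial_sums)
  have abel: "(\<Sum>t<j. v t *\<^sub>R a t) = (\<Sum>t<j. (v t - v (Suc t)) *\<^sub>R S (Suc t)) + v j *\<^sub>R S j" for j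
    by (induction j) (simp_all add: S_def algebra_simps)
  have "norm (\<Sum>t<n. (v t - v (Suc t)) *\<^sub>R S (Suc t)) \<le> (\<Sum>t<n. (v t - v (Suc t)) * K)"
    using S_le dec by (intro order_trans[OF norm_sum] sum_mono) (simp add: mult_left_mono)
  moreover have "norm (v n *\<^sub>R S n) \<le> v n * K"
    using S_le[of n] nonneg[of n] by (simp add: mult_left_mono)
  moreover have "(\<Sum>t<n. (v t - v (Suc t)) * K) + v n * K = v 0 * K"
    by (simp only: sum_distrib_right[symmetric] sum_lessThan_telescope') (simp add: algebra_simps)
  ultimately show ?thesis
    unfolding abel by (smt (verit) norm_triangle_ineq)
qed

lemma Qs_nonneg: "(\<And>k. 0 \<le> q k) \<Longrightarrow> 0 \<le> Qs q n"
  unfolding Qs_def by (simp add: sum_nonneg)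

lemma Fn_eq: "Fn m q n y = (\<Sum>t<n. of_real (q (n - Suc t)) * Dir m (Suc t) y) / of_real (Qs q n)"
proof -
  have "(\<Sum>j=1..n. of_real (q (n - j)) * Dir m j y) = (\<Sum>t<n. of_real (q (n - Suc t)) * Dir m (Suc t) y)"
    by (rule sum.reindex_bij_witness[of _ Suc "\<lambda>j. j - 1"]) auto
  then show ?thesis by (simp add: Fn_def)
qed

lemma norm_Fn_eq:
  assumes "\<And>k. 0 \<le> q k"
  shows "norm (Fn m q n y) = norm (\<Sum>t<n. q (n - Suc t) *\<^sub>R Dir m (Suc t) y) / Qs q n"
  using Qs_nonneg[of q n] assms by (simp add: Fn_eq norm_divide scaleR_conv_of_real)

lemma norm_Fn_le:
  assumes q_nonneg: "\<And>k. 0 \<le> q k" and Dir_le: "\<And>j. norm (Dir m j y) \<le> K"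
  shows "norm (Fn m q n y) \<le> K"
proof -
  have "norm (\<Sum>t<n. q (n - Suc t) *\<^sub>R Dir m (Suc t) y) \<le> (\<Sum>t<n. q (n - Suc t) * K)"
    using q_nonneg Dir_le by (intro order_trans[OF norm_sum] sum_mono) (simp add: mult_left_mono)
  also have "\<dots> = Qs q n * K"
    by (simp add: Qs_def sum_distrib_right[symmetric] sum.nat_diff_reindex[where g=q])
  finally have "norm (Fn m q n y) \<le> Qs q n * K / Qs q n"
    unfolding norm_Fn_eq[OF q_nonneg] by (rule divide_right_mono) (simp add: Qs_nonneg q_nonneg)
  also have "\<dots> \<le> K" using order_trans[OF norm_ge_zero Dir_le] by simp
  finally show ?thesis .
qed

lemma norm_Fn_le_Abel:
  assumes "mono q" and q_nonneg: "\<And>k. 0 \<le> q k"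
    and partial_sums: "\<And>j. norm (\<Sum>i<j. Dir m i y) \<le> K"
  shows "norm (Fn m q n y) \<le> q (n - 1) / Qs q n * K"
proof -
  have "Dir m 0 y = 0" by (simp add: Dir_def)
  then have "(\<Sum>t<j. Dir m (Suc t) y) = (\<Sum>i<Suc j. Dir m i y)" for j
    by (simp only: sum.lessThan_Suc_shift) simp
  then have "norm (\<Sum>t<n. q (n - Suc t) *\<^sub>R Dir m (Suc t) y) \<le> q (n - Suc 0) * K"
    using partial_sums q_nonneg monoD[OF \<open>mono q\<close>]
    by (intro norm_sum_decreasing_weights_le) (auto simp del: sum.lessThan_Suc)
  then show ?thesis
    unfolding norm_Fn_eq[OF q_nonneg] by (simp add: divide_right_mono Qs_nonneg q_nonneg)
qed

lemma bigo_inverse_uniform_bound: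
  fixes f :: "nat \<Rightarrow> real"
  assumes "f \<in> O(\<lambda>n. 1 / real n)" and bounded: "\<And>n. f n \<le> b"
  obtains C where "0 < C" "\<And>n. 1 \<le> n \<Longrightarrow> f n \<le> C / n"
proof -
  obtain C0 where "0 < C0" and "eventually (\<lambda>n. norm (f n) \<le> C0 * norm (1 / real n)) at_top"
    using assms(1) by (elim landau_o.bigE) auto
  then obtain n0 where n0: "\<And>n. n0 \<le> n \<Longrightarrow> \<bar>f n\<bar> \<le> C0 / n"
    by (auto simp: eventually_at_top_linorder)
  define C where "C = max C0 (\<bar>b\<bar> * n0)"
  have "f n \<le> C / n" if "1 \<le> n" for n
  proof (cases "n0 \<le> n")
    case True
    then have "f n \<le> C0 / n" using n0 by fastforce
    also have "\<dots> \<le> C / n" by (simp add: C_def divide_right_mono)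
    finally show ?thesis .
  next
    case False
    then have "1 \<le> real n0 / n" using that by simp
    then have "\<bar>b\<bar> * 1 \<le> \<bar>b\<bar> * (n0 / n)" by (intro mult_left_mono) simp_all
    then have "f n \<le> \<bar>b\<bar> * n0 / n" using bounded[of n] by simp
    also have "\<dots> \<le> C / n" by (simp add: C_def divide_right_mono)
    finally show ?thesis .
  qed
  moreover have "0 < C" using \<open>0 < C0\<close> by (simp add: C_def)
  ultimately show thesis using that by blast
qed

lemma Qs_ratio_le_1:
  assumes "\<And>k. 0 \<le> q k"
  shows "q (n - 1) / Qs q n \<le> 1"
proof (cases n)
  case (Suc n')
  then have "q (n - 1) \<le> Qs q n" using assms Qs_nonneg[of q n'] by (simp add: Qs_def)
  moreover have "0 \<le> Qs q n" using assms by (rule Qs_nonneg)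
  ultimately show ?thesis by (auto simp: divide_le_eq_1)
qed (simp add: Qs_def)

lemma VM_Suc_le:
  assumes "\<And>k. m k \<le> B"
  shows "real (VM m (Suc j)) \<le> B * VM m j"
  using mult_right_mono[of "real (m j)" B "real (VM m j)"] assms[of j] by (simp add: VM_Suc mult.commute)

lemma set_integral_le_bound_mult_measure:
  fixes f :: "'a \<Rightarrow> real"
  assumes "finite_measure M" "A \<in> sets M"
    and "\<And>t. t \<in> A \<Longrightarrow> f t \<le> K" "\<And>t. 0 \<le> f t" "0 \<le> K"
  shows "(LINT t:A|M. f t) \<le> K * measure M A"
proof (cases "set_integrable M A f")
  case True
  interpret finite_measure M by fact
  have "(LINT t:A|M. f t) \<le> (LINT t:A|M. K)"
    using assms True
    by (intro set_integral_mono) (auto simp: set_integrable_def emeasure_finite less_top[symmetric])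
  then show ?thesis using assms(2) by (simp add: set_integral_const emeasure_finite mult.commute)
next
  case False
  then show ?thesis
    using assms(5) by (simp add: set_lebesgue_integral_def set_integrable_def not_integrable_integral_eq)
qed

lemma Vsub_eq_if_IN:
  assumes "x \<in> Vspace m" "t \<in> IN m N" "j < N"
  shows "Vsub m x t j = x j"
  using assms by (auto simp: Vsub_def IN_def Vspace_def PiE_iff)

lemma rk_Vsub_ne_1:
  assumes "x \<in> Vspace m" "t \<in> IN m N" "j < N" "x j \<noteq> 0"
  shows "rk m j (Vsub m x t) \<noteq> 1"
  using assms rk_eq_1_iff[of "Vsub m x t" j m] by (auto simp: Vsub_eq_if_IN Vspace_def)

context vilenkin
begin

lemma prob_space_Vmu: "prob_space (Vmu m)"
  unfolding Vmu_def
proof (intro prob_space_PiM prob_space_uniform_count_measure)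
  show "{..<m i} \<noteq> {}" for i using m_pos[of i] by blast
qed simp

lemma IN_eq_prod_emb:
  "IN m N = prod_emb UNIV (\<lambda>k. uniform_count_measure {..<m k}) {..<N} (\<Pi>\<^sub>E j\<in>{..<N}. {0})"
  unfolding IN_def prod_emb_def Vspace_def
  by (auto simp: space_PiM space_uniform_count_measure fun_eq_iff restrict_def split: if_splits)

lemma IN_sets: "IN m N \<in> sets (Vmu m)"
  unfolding IN_eq_prod_emb Vmu_def
  by (rule sets_PiM_I) (use m_pos in \<open>auto simp: sets_uniform_count_measure\<close>)

lemma measure_IN: "measure (Vmu m) (IN m N) = 1 / VM m N"
proof -
  interpret product_prob_space "\<lambda>k. uniform_count_measure {..<m k}" UNIV
    unfolding product_prob_space_def product_sigma_finite_def product_prob_space_axioms_def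
    using m_pos by (auto intro!: prob_space_uniform_count_measure prob_space_imp_sigma_finite)
  have "emeasure (Vmu m) (IN m N) = (\<Prod>i<N. emeasure (uniform_count_measure {..<m i}) {0})"
    unfolding IN_eq_prod_emb Vmu_def
    by (rule emeasure_PiM_emb) (use m_pos in \<open>auto simp: sets_uniform_count_measure\<close>)
  also have "\<dots> = (\<Prod>i<N. ennreal (1 / m i))"
    using m_pos by (intro prod.cong refl)
      (simp add: emeasure_uniform_count_measure ennreal_of_nat_eq_real_of_nat divide_ennreal)
  also have "\<dots> = ennreal (1 / VM m N)"
    by (simp add: prod_ennreal VM_def prod_dividef)
  finally show ?thesis by (simp add: measure_def)
qed

lemma set_integral_IN_le:
  assumes "\<And>t. t \<in> IN m N \<Longrightarrow> f t \<le> K" "\<And>t. 0 \<le> f t" "0 \<le> K"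
  shows "(LINT t:IN m N|Vmu m. f t) \<le> K / VM m N"
  using set_integral_le_bound_mult_measure[OF prob_space.finite_measure[OF prob_space_Vmu] IN_sets assms]
  by (simp add: measure_IN)

lemma integral_Fn_INkl_le:
  assumes "mono q" "\<And>k. 0 \<le> q k" "x \<in> INkl m N k l" "k < l" "l < N"
  shows "(LINT t:IN m N|Vmu m. cmod (Fn m q n (Vsub m x t)))
    \<le> q (n - 1) / Qs q n * (VM m (Suc l) * VM m (Suc k)) / VM m N"
proof (rule set_integral_IN_le)
  fix t assume "t \<in> IN m N"
  moreover have "x \<in> Vspace m" "x k \<noteq> 0" "x l \<noteq> 0" using assms(3) by (auto simp: INkl_def)
  ultimately have "rk m k (Vsub m x t) \<noteq> 1" "rk m l (Vsub m x t) \<noteq> 1"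
    using assms(4,5) rk_Vsub_ne_1[where j=k] rk_Vsub_ne_1[where j=l] by simp_all
  then show "cmod (Fn m q n (Vsub m x t)) \<le> q (n - 1) / Qs q n * (VM m (Suc l) * VM m (Suc k))"
    using norm_Fn_le_Abel[OF assms(1,2) norm_sum_Dir_le[OF \<open>k < l\<close>]] by simp
qed (simp_all add: assms(2) Qs_nonneg)

lemma integral_Fn_INkN_le:
  assumes "\<And>k. 0 \<le> q k" "x \<in> INkN m N k" "k < N"
  shows "(LINT t:IN m N|Vmu m. cmod (Fn m q n (Vsub m x t))) \<le> VM m (Suc k) / VM m N"
proof (rule set_integral_IN_le)
  fix t assume "t \<in> IN m N"
  moreover have "x \<in> Vspace m" "x k \<noteq> 0" using assms(2) by (auto simp: INkN_def)
  ultimately have "rk m k (Vsub m x t) \<noteq> 1" using assms(3) rk_Vsub_ne_1[where j=k] by simp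
  then show "cmod (Fn m q n (Vsub m x t)) \<le> VM m (Suc k)"
    by (intro norm_Fn_le[OF assms(1)] norm_Dir_le)
qed simp_all

end

theorem mainTheorem6:
  fixes m :: "nat \<Rightarrow> nat" and q :: "nat \<Rightarrow> real"
  assumes m_ge2: "\<And>k. m k \<ge> 2"
    and m_bdd: "\<exists>B. \<forall>k. m k \<le> B"
    and q_mono: "mono q"
    and q_nonneg: "\<And>k. q k \<ge> 0"
    and q0: "q 0 > 0"
    and q_O: "(\<lambda>n. q (n - 1) / Qs q n) \<in> O(\<lambda>n. 1 / real n)"
  shows "\<exists>c>0. \<forall>N n. n \<ge> VM m N \<longrightarrow>
     (\<forall>k l x. k + 2 \<le> N \<longrightarrow> k + 1 \<le> l \<longrightarrow> l + 1 \<le> N \<longrightarrow> x \<in> INkl m N k l \<longrightarrow>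
        (LINT t:IN m N|Vmu m. cmod (Fn m q n (Vsub m x t)))
          \<le> c * real (VM m l) * real (VM m k) / (real n * real (VM m N))) \<and>
     (\<forall>k x. k + 1 \<le> N \<longrightarrow> x \<in> INkN m N k \<longrightarrow>
        (LINT t:IN m N|Vmu m. cmod (Fn m q n (Vsub m x t)))
          \<le> c * real (VM m k) / real (VM m N))"
proof -
  interpret vilenkin m using m_ge2 by unfold_locales
  obtain B where B: "\<And>k. m k \<le> B" using m_bdd by blast
  obtain C where "0 < C" and ratio: "\<And>n. 1 \<le> n \<Longrightarrow> q (n - 1) / Qs q n \<le> C / n"
    using bigo_inverse_uniform_bound[OF q_O Qs_ratio_le_1[OF q_nonneg]] by blast
  note M_Suc_le = VM_Suc_le[of m B, OF B]
  define c where "c = C * B\<^sup>2 + B"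
  have "0 < c" using \<open>0 < C\<close> B[of 0] m_ge2[of 0] by (simp add: c_def add_nonneg_pos)
  show ?thesis
  proof (intro exI[of _ c] conjI allI impI \<open>0 < c\<close>)
    fix N n k l x assume "VM m N \<le> n" "k + 2 \<le> N" "k + 1 \<le> l" "l + 1 \<le> N" "x \<in> INkl m N k l"
    then have "1 \<le> n" using VM_pos[of N] by linarith
    have "(LINT t:IN m N|Vmu m. cmod (Fn m q n (Vsub m x t)))
        \<le> q (n - 1) / Qs q n * (VM m (Suc l) * VM m (Suc k)) / VM m N"
      using \<open>x \<in> INkl m N k l\<close> \<open>k + 1 \<le> l\<close> \<open>l + 1 \<le> N\<close>
      by (intro integral_Fn_INkl_le q_mono q_nonneg) simp_all
    also have "\<dots> \<le> C / n * ((B * VM m l) * (B * VM m k)) / VM m N"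
      using ratio[OF \<open>1 \<le> n\<close>] \<open>0 < C\<close> mult_mono[OF M_Suc_le M_Suc_le]
      by (intro divide_right_mono mult_mono) simp_all
    also have "\<dots> \<le> c * VM m l * VM m k / (real n * VM m N)"
      by (simp add: c_def power2_eq_square field_simps divide_right_mono mult_right_mono)
    finally show "(LINT t:IN m N|Vmu m. cmod (Fn m q n (Vsub m x t)))
        \<le> c * VM m l * VM m k / (real n * VM m N)" .
  next
    fix N n k x assume "VM m N \<le> n" "k + 1 \<le> N" "x \<in> INkN m N k"
    then have "(LINT t:IN m N|Vmu m. cmod (Fn m q n (Vsub m x t))) \<le> VM m (Suc k) / VM m N"
      by (intro integral_Fn_INkN_le q_nonneg) simp_all
    also have "\<dots> \<le> c * VM m k / VM m N"
      using M_Suc_le[of k] mult_right_mono[of B c "real (VM m k)"] \<open>0 < C\<close>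
      by (intro divide_right_mono) (simp_all add: c_def)
    finally show "(LINT t:IN m N|Vmu m. cmod (Fn m q n (Vsub m x t))) \<le> c * VM m k / VM m N" .
  qed
qed

end
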